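(* Let $\{n_k\}_{k\ge0}$ be an increasing sequence of natural numbers with $n_{k+1}/n_k\le C$ for some constant $C$. Let $f$ be holomorphic on the open unit disk, $0<r<1$, $K=\overline\Delta_r$, and let $N_K(n)$ be the maximal number (possibly $+\infty$) of zeros on $K$ of $f-p$, $p\in\mathcal P_n$. If $\lim_{k\to\infty}N_K(n_k)/n_k=\infty$, then $f$ is a polynomial.
   Context: $\mathcal P_n$ is the space of complex polynomials of degree at most $n$; zeros are counted with multiplicity. *)

theory Defs
  imports "HOL-Analysis.Analysis" "HOL-Computational_Algebra.Polynomial"
begin

text \<open>Multiplicity of a zero of g at z: the largest m (possibly infinity) such that
  the derivatives of order 0,...,m-1 of g vanish at z. (Non-zeros have multiplicity 0;
  a function vanishing identically near z has multiplicity infinity.)\<close>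
definition zero_mult :: "(complex \<Rightarrow> complex) \<Rightarrow> complex \<Rightarrow> enat" where
  "zero_mult g z = (SUP m \<in> {m::nat. \<forall>k<m. (deriv ^^ k) g z = 0}. enat m)"

definition zero_count :: "(complex \<Rightarrow> complex) \<Rightarrow> complex set \<Rightarrow> enat" where
  "zero_count g K = (SUP S \<in> {S. finite S \<and> S \<subseteq> K}. \<Sum>z\<in>S. zero_mult g z)"

definition NK :: "(complex \<Rightarrow> complex) \<Rightarrow> complex set \<Rightarrow> nat \<Rightarrow> enat" where
  "NK f K n = (SUP p \<in> {p::complex poly. degree p \<le> n}. zero_count (\<lambda>z. f z - poly p z) K)"

end

theory Submission
  imports Defs "HOL-Complex_Analysis.Complex_Analysis"
begin

text \<open>
  Suppose \<open>F - p\<close>, with \<open>deg p \<le> n\<close>, has \<open>N\<close> zeros in \<open>|z| \<le> r\<close>. Dividing them out by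
  Blaschke factors of the disc \<open>|z| \<le> \<rho>\<close> and using the maximum principle bounds \<open>|F - p|\<close> on
  \<open>|z| \<le> r\<close> by \<open>4 \<theta>\<^sup>N (n + 1) (\<rho>/r)\<^sup>n\<close> times the maximum of \<open>|F|\<close> on \<open>|z| \<le> \<rho>\<close>, where
  \<open>\<theta> = 2\<rho>r/(\<rho>\<^sup>2 + r\<^sup>2) < 1\<close>, as soon as this factor is small; by Cauchy's estimate the
  Taylor coefficients of \<open>F\<close> of index \<open>j > n\<close> obey the same bound.
  Since \<open>N\<close> can be taken \<open>\<ge> M n\<close> for every \<open>M\<close>, while every large \<open>j\<close> lies in some
  \<open>(n\<^sub>k, n\<^sub>k\<^sub>+\<^sub>1] \<subseteq> (n\<^sub>k, C n\<^sub>k]\<close>, the Taylor coefficients of \<open>f\<close> decay faster than any geometric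
  sequence, so \<open>f\<close> extends to an entire function. If that function were not a polynomial,
  take a large radius \<open>R\<close> and the index \<open>j\<close> of the largest term \<open>|a\<^sub>j| R\<^sup>j\<close> of its Taylor
  series: the maximal term bounds the function on \<open>|z| \<le> R/2\<close>, and the estimate with
  \<open>\<rho> = R/2\<close> then bounds \<open>|a\<^sub>j| r\<^sup>j\<close> by half of itself.
\<close>

section \<open>Dividing out zeros\<close>

lemma higher_deriv_linear_factor:
  assumes "G holomorphic_on S" "open S" "z \<in> S"
  shows "(deriv ^^ k) (\<lambda>w. (w - a) * G w) z
           = (z - a) * (deriv ^^ k) G z + of_nat k * (deriv ^^ (k - 1)) G z"
proof -
  have lin: "(deriv ^^ i) (\<lambda>w. w - a) z = (if i = 0 then z - a else if i = 1 then 1 else 0)" for i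
    using higher_deriv_diff[of "\<lambda>w. w" UNIV "\<lambda>w. a" z i] by simp
  have "(deriv ^^ k) (\<lambda>w. (w - a) * G w) z =
      (\<Sum>i = 0..k. of_nat (k choose i) * (deriv ^^ i) (\<lambda>w. w - a) z * (deriv ^^ (k - i)) G z)"
    by (rule higher_deriv_mult) (use assms in \<open>auto intro: holomorphic_intros\<close>)
  also have "\<dots> = (z - a) * (deriv ^^ k) G z + of_nat k * (deriv ^^ (k - 1)) G z"
  proof -
    have "of_nat (k choose i) * (deriv ^^ i) (\<lambda>w. w - a) z * (deriv ^^ (k - i)) G z =
        (if i = 0 then (z - a) * (deriv ^^ k) G z else 0) +
        (if i = 1 then of_nat k * (deriv ^^ (k - 1)) G z else 0)" for i
      by (simp add: lin)
    then show ?thesis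
      by (simp add: sum.distrib)
  qed
  finally show ?thesis .
qed

lemma holomorphic_factor_zero:
  assumes "g holomorphic_on S" "open S" "g a = 0"
  obtains G where "G holomorphic_on S" "\<And>w. w \<in> S \<Longrightarrow> g w = (w - a) * G w"
proof
  let ?G = "\<lambda>z. if z = a then deriv g a else (g z - g a) / (z - a)"
  show "?G holomorphic_on S" by (rule pole_lemma_open[OF assms(1,2)])
  show "g w = (w - a) * ?G w" if "w \<in> S" for w
    using assms(3) by auto
qed

lemma higher_deriv_factor_eq_0:
  assumes G: "G holomorphic_on S" "open S" "z \<in> S"
    and g: "\<And>w. w \<in> S \<Longrightarrow> g w = (w - a) * G w"
    and vanish: "\<forall>k<m. (deriv ^^ k) g z = 0"
  shows "\<forall>k < (if z = a then m - 1 else m). (deriv ^^ k) G z = 0"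
proof -
  have g_deriv: "(deriv ^^ k) g z = (z - a) * (deriv ^^ k) G z + of_nat k * (deriv ^^ (k - 1)) G z" for k
  proof -
    have "(deriv ^^ k) g z = (deriv ^^ k) (\<lambda>w. (w - a) * G w) z"
      by (rule higher_deriv_cong_ev[OF _ refl])
         (use G g in \<open>auto simp: eventually_nhds intro!: exI[of _ S]\<close>)
    with higher_deriv_linear_factor[OF G] show ?thesis by simp
  qed
  show ?thesis
  proof (cases "z = a")
    case True
    have "(deriv ^^ k) G a = 0" if "Suc k < m" for k
      using g_deriv[of "Suc k"] vanish[rule_format, of "Suc k"] that True by (simp del: of_nat_Suc)
    with True show ?thesis by auto
  next
    case False
    have "(deriv ^^ k) G z = 0" if "k < m" for k
      using that
    proof (induction k)
      case 0
      with g_deriv[of 0] vanish[rule_format, of 0] False show ?case by simp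
    next
      case (Suc k)
      with g_deriv[of "Suc k"] vanish[rule_format, of "Suc k"] False show ?case by simp
    qed
    with False show ?thesis by auto
  qed
qed

lemma holomorphic_factor_zeros:
  assumes "open S" "g holomorphic_on S" "finite Z" "Z \<subseteq> S"
    "\<forall>z\<in>Z. \<forall>k<m z. (deriv ^^ k) g z = 0" "N \<le> (\<Sum>z\<in>Z. m z)"
  shows "\<exists>a h. a ` {..<N} \<subseteq> Z \<and> h holomorphic_on S \<and> (\<forall>w\<in>S. g w = (\<Prod>i<N. w - a i) * h w)"
  using assms(2-)
proof (induction N arbitrary: g m)
  case 0
  then show ?case by auto
next
  case (Suc N)
  obtain z0 where z0: "z0 \<in> Z" "0 < m z0"
    using Suc.prems(5) by (metis gr0I not_less_eq_eq sum.neutral zero_le)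
  then have "g z0 = 0"
    using Suc.prems(4) by (metis funpow_0)
  then obtain G where G: "G holomorphic_on S" "\<And>w. w \<in> S \<Longrightarrow> g w = (w - z0) * G w"
    using holomorphic_factor_zero[OF Suc.prems(1) assms(1)] by blast
  define m' where "m' = m(z0 := m z0 - 1)"
  have "(\<Sum>z\<in>Z. m z) = m z0 + (\<Sum>z\<in>Z - {z0}. m' z)"
    unfolding m'_def using Suc.prems(2) z0(1) by (simp add: sum.remove)
  moreover have "(\<Sum>z\<in>Z. m' z) = m' z0 + (\<Sum>z\<in>Z - {z0}. m' z)"
    using Suc.prems(2) z0(1) by (simp add: sum.remove)
  ultimately have "N \<le> (\<Sum>z\<in>Z. m' z)"
    using Suc.prems(5) z0(2) by (simp add: m'_def)
  moreover have "\<forall>z\<in>Z. \<forall>k<m' z. (deriv ^^ k) G z = 0"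
    using higher_deriv_factor_eq_0[OF G(1) assms(1) _ G(2)] Suc.prems(3,4)
    by (auto simp: m'_def subset_iff)
  ultimately obtain a h where a: "a ` {..<N} \<subseteq> Z" "h holomorphic_on S"
      "\<forall>w\<in>S. G w = (\<Prod>i<N. w - a i) * h w"
    using Suc.IH[OF G(1) Suc.prems(2,3)] by blast
  show ?case
  proof (intro exI conjI)
    show "case_nat z0 a ` {..<Suc N} \<subseteq> Z"
      using a(1) z0(1) by (auto simp: lessThan_Suc_eq_insert_0)
    show "\<forall>w\<in>S. g w = (\<Prod>i<Suc N. w - case_nat z0 a i) * h w"
      using G(2) a(3) by (simp add: prod.lessThan_Suc_shift mult.assoc del: prod.lessThan_Suc)
  qed fact
qed

section \<open>Counting zeros\<close>

lemma higher_deriv_eq_0_if_zero_mult_ge: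
  assumes "enat c \<le> zero_mult g z" "k < c"
  shows "(deriv ^^ k) g z = 0"
proof -
  have "enat k < (SUP m \<in> {m. \<forall>k<m. (deriv ^^ k) g z = 0}. enat m)"
    using assms unfolding zero_mult_def by (meson enat_ord_simps(2) less_le_trans)
  then show ?thesis
    unfolding less_SUP_iff by auto
qed

lemma zero_count_geE:
  assumes "enat N \<le> zero_count g K"
  obtains Z m where "finite Z" "Z \<subseteq> K" "\<forall>z\<in>Z. \<forall>k<m z. (deriv ^^ k) g z = 0"
    "N \<le> (\<Sum>z\<in>Z. m z)"
proof (cases N)
  case 0
  then show ?thesis using that[of "{}"] by simp
next
  case (Suc L)
  with assms have "enat L < zero_count g K"
    by (simp add: Suc_ile_eq)
  then obtain S where S: "finite S" "S \<subseteq> K" "enat L < (\<Sum>z\<in>S. zero_mult g z)"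
    unfolding zero_count_def less_SUP_iff by auto
  define m where "m z = (case zero_mult g z of enat c \<Rightarrow> c | \<infinity> \<Rightarrow> N)" for z
  have "enat (m z) \<le> zero_mult g z" for z
    by (cases "zero_mult g z") (simp_all add: m_def)
  then have "\<forall>z\<in>S. \<forall>k<m z. (deriv ^^ k) g z = 0"
    using higher_deriv_eq_0_if_zero_mult_ge by blast
  moreover have "N \<le> (\<Sum>z\<in>S. m z)"
  proof (cases "\<exists>z\<in>S. zero_mult g z = \<infinity>")
    case True
    then obtain z where "z \<in> S" "m z = N"
      by (auto simp: m_def)
    then show ?thesis
      using S(1) by (metis member_le_sum zero_le)
  next
    case False
    then have "(\<Sum>z\<in>S. zero_mult g z) = (\<Sum>z\<in>S. of_nat (m z))"
      by (auto simp: m_def of_nat_eq_enat intro!: sum.cong split: enat.split)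
    then have "(\<Sum>z\<in>S. zero_mult g z) = enat (\<Sum>z\<in>S. m z)"
      by (simp add: of_nat_eq_enat[symmetric])
    with S(3) Suc show ?thesis
      by simp
  qed
  ultimately show ?thesis
    using that S(1,2) by blast
qed

lemma zero_count_factor:
  assumes "open S" "g holomorphic_on S" "K \<subseteq> S" "enat N \<le> zero_count g K"
  obtains a h where "a ` {..<N} \<subseteq> K" "h holomorphic_on S"
    "\<And>w. w \<in> S \<Longrightarrow> g w = (\<Prod>i<N. w - a i) * h w"
proof -
  obtain Z m where Z: "finite Z" "Z \<subseteq> K" "\<forall>z\<in>Z. \<forall>k<m z. (deriv ^^ k) g z = 0"
      "N \<le> (\<Sum>z\<in>Z. m z)"
    using assms(4) by (rule zero_count_geE)
  then obtain a h where "a ` {..<N} \<subseteq> Z" "h holomorphic_on S"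
      "\<forall>w\<in>S. g w = (\<Prod>i<N. w - a i) * h w"
    using holomorphic_factor_zeros[OF assms(1,2) Z(1) _ Z(3,4)] assms(3) by blast
  with Z(2) show thesis
    by (intro that) auto
qed

lemma zero_count_cong:
  assumes "open S" "K \<subseteq> S" "\<And>w. w \<in> S \<Longrightarrow> g w = h w"
  shows "zero_count g K = zero_count h K"
proof -
  have "(deriv ^^ k) g z = (deriv ^^ k) h z" if "z \<in> K" for z k
    by (rule higher_deriv_cong_ev[OF _ refl])
       (use assms that in \<open>auto simp: eventually_nhds intro!: exI[of _ S]\<close>)
  then have "zero_mult g z = zero_mult h z" if "z \<in> K" for z
    using that unfolding zero_mult_def by simp
  then show ?thesis
    unfolding zero_count_def by (intro SUP_cong refl sum.cong) auto
qed

lemma strict_mono_bracket: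
  assumes "strict_mono (s :: nat \<Rightarrow> nat)" "s K < j"
  shows "\<exists>k\<ge>K. s k < j \<and> j \<le> s (Suc k)"
proof (rule ccontr)
  assume none: "\<not> ?thesis"
  have "s k < j" if "K \<le> k" for k
    using that
  proof (induction k rule: dec_induct)
    case (step k)
    then show ?case
      using none by (meson leI order.trans)
  qed (use assms(2) in auto)
  moreover have "K + j \<le> s (K + j)"
    by (rule seq_suble[OF assms(1)])
  ultimately show False
    by (metis le_add1 le_add2 leD order_le_less_trans)
qed

text \<open>The form in which the hypotheses \<open>n\<^sub>k\<^sub>+\<^sub>1 \<le> D n\<^sub>k\<close> and \<open>N\<^sub>K(n\<^sub>k)/n\<^sub>k \<rightarrow> \<infinity>\<close> are used.\<close>
definition superlinear_zeros :: "(complex \<Rightarrow> complex) \<Rightarrow> complex set \<Rightarrow> nat \<Rightarrow> bool" where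
  "superlinear_zeros f K D \<longleftrightarrow>
     (\<forall>M L. eventually (\<lambda>j. \<exists>n p. L \<le> n \<and> n < j \<and> j \<le> D * n \<and> degree p \<le> n \<and>
        enat (M * n) \<le> zero_count (\<lambda>z. f z - poly p z) K) sequentially)"

lemma superlinear_zeros_cong:
  assumes "superlinear_zeros f K D" "open S" "K \<subseteq> S" "\<And>w. w \<in> S \<Longrightarrow> f w = g w"
  shows "superlinear_zeros g K D"
proof -
  have "zero_count (\<lambda>z. f z - poly p z) K = zero_count (\<lambda>z. g z - poly p z) K" for p
    by (rule zero_count_cong) (use assms in auto)
  with assms(1) show ?thesis
    unfolding superlinear_zeros_def by simp
qed

lemma superlinear_zeros_if_NK:
  assumes mono: "strict_mono nk" and gap: "\<forall>k\<ge>1. nk (Suc k) \<le> D * nk k"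
    and many: "\<forall>M. eventually (\<lambda>k. enat (M * nk k) < NK f K (nk k)) sequentially"
  shows "superlinear_zeros f K D"
  unfolding superlinear_zeros_def
proof (intro allI)
  fix M L :: nat
  obtain K0 where K0: "\<And>k. K0 \<le> k \<Longrightarrow> enat (M * nk k) < NK f K (nk k)"
    using many unfolding eventually_sequentially by blast
  have "\<exists>n p. L \<le> n \<and> n < j \<and> j \<le> D * n \<and> degree p \<le> n \<and>
          enat (M * n) \<le> zero_count (\<lambda>z. f z - poly p z) K"
    if j: "nk (max K0 (max L 1)) < j" for j
  proof -
    obtain k where k: "max K0 (max L 1) \<le> k" "nk k < j" "j \<le> nk (Suc k)"
      using strict_mono_bracket[OF mono j] by blast
    have "k \<le> nk k"
      by (rule seq_suble[OF mono])
    moreover obtain p where "degree p \<le> nk k" "enat (M * nk k) < zero_count (\<lambda>z. f z - poly p z) K"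
      using K0[of k] k(1) unfolding NK_def less_SUP_iff by auto
    ultimately show ?thesis
      using k gap by (intro exI[of _ "nk k"] exI[of _ p]) (auto intro: order_trans)
  qed
  then show "eventually (\<lambda>j. \<exists>n p. L \<le> n \<and> n < j \<and> j \<le> D * n \<and> degree p \<le> n \<and>
               enat (M * n) \<le> zero_count (\<lambda>z. f z - poly p z) K) sequentially"
    unfolding eventually_sequentially by (meson Suc_le_eq)
qed

text \<open>Only \<open>k \<ge> 1\<close>: \<open>s 0\<close> may be \<open>0\<close>, where the quotient is the junk value \<open>0\<close>.\<close>
lemma nat_ratio_bound:
  fixes s :: "nat \<Rightarrow> nat"
  assumes "strict_mono s" "\<forall>k. real (s (Suc k)) / real (s k) \<le> C"
  shows "\<forall>k\<ge>1. s (Suc k) \<le> nat \<lceil>C\<rceil> * s k"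
proof (intro allI impI)
  fix k :: nat
  assume "1 \<le> k"
  then have pos: "0 < real (s k)"
    using seq_suble[OF assms(1), of k] by simp
  then have "real (s (Suc k)) \<le> C * real (s k)"
    using assms(2) by (simp add: divide_le_eq)
  also have "\<dots> \<le> real (nat \<lceil>C\<rceil>) * real (s k)"
    using pos by (intro mult_right_mono) (auto simp: real_nat_ceiling_ge)
  finally show "s (Suc k) \<le> nat \<lceil>C\<rceil> * s k"
    by (simp only: of_nat_mult[symmetric] of_nat_le_iff)
qed

lemma eventually_less_if_ratio_tendsto_PInfty:
  assumes lim: "((\<lambda>k. ereal_of_enat (u k) / ereal (real (d k))) \<longlongrightarrow> \<infinity>) sequentially"
    and pos: "eventually (\<lambda>k. 0 < d k) sequentially"
  shows "eventually (\<lambda>k. enat (M * d k) < u k) sequentially"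
  using lim[unfolded tendsto_PInfty, rule_format, of "real M"] pos
proof eventually_elim
  case (elim k)
  show ?case
  proof (cases "u k")
    case (enat c)
    with elim have "real M * real (d k) < real c"
      by (simp add: less_divide_eq)
    then have "M * d k < c"
      by (simp only: of_nat_mult[symmetric] of_nat_less_iff)
    with enat show ?thesis
      by simp
  qed simp
qed

section \<open>The Blaschke estimate\<close>

text \<open>The supremum of the Blaschke factor \<open>\<rho> (z - a) / (\<rho>\<^sup>2 - cnj a * z)\<close> of the disc of
  radius \<open>\<rho>\<close> over \<open>|a|, |z| \<le> r\<close>, attained at \<open>z = r\<close>, \<open>a = -r\<close>.\<close>
definition blaschke_sup :: "real \<Rightarrow> real \<Rightarrow> real" where
  "blaschke_sup r \<rho> = 2 * \<rho> * r / (\<rho>\<^sup>2 + r\<^sup>2)"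

lemma blaschke_sup_nonneg: "0 \<le> r \<Longrightarrow> 0 \<le> \<rho> \<Longrightarrow> 0 \<le> blaschke_sup r \<rho>"
  unfolding blaschke_sup_def by simp

lemma blaschke_sup_less_1:
  assumes "0 < r" "r < \<rho>"
  shows "blaschke_sup r \<rho> < 1"
proof -
  have "2 * \<rho> * r < \<rho>\<^sup>2 + r\<^sup>2"
    using assms by (smt (verit) mult_pos_pos power2_diff power2_eq_square)
  then show ?thesis
    unfolding blaschke_sup_def
    by (simp add: divide_less_eq) (metis add_nonneg_nonneg not_less zero_le_power2)
qed

lemma blaschke_sup_le:
  assumes "0 < r" "0 < \<rho>"
  shows "blaschke_sup r \<rho> \<le> 2 * r / \<rho>"
proof -
  have "blaschke_sup r \<rho> \<le> 2 * \<rho> * r / \<rho>\<^sup>2"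
    unfolding blaschke_sup_def using assms
    by (intro divide_left_mono) (auto intro!: mult_pos_pos add_pos_nonneg)
  then show ?thesis
    using assms by (simp add: power2_eq_square)
qed

lemma norm_blaschke_denominator_le:
  fixes a z :: complex
  assumes "0 < r" "norm a \<le> r" "norm z \<le> r"
  shows "norm (of_real (\<rho>\<^sup>2) - cnj a * z) \<le> \<rho>\<^sup>2 + r\<^sup>2"
proof -
  have "norm (cnj a * z) \<le> r * r"
    using assms by (simp add: norm_mult mult_mono)
  moreover have "norm (of_real (\<rho>\<^sup>2) :: complex) = \<rho>\<^sup>2"
    by (simp only: norm_of_real) simp
  ultimately show ?thesis
    using norm_triangle_ineq4[of "of_real (\<rho>\<^sup>2)" "cnj a * z"] by (simp add: power2_eq_square)
qed

lemma blaschke_factor_ineq: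
  fixes a z :: complex
  assumes r: "0 < r" "r < \<rho>" and az: "norm a \<le> r" "norm z \<le> r"
  shows "\<rho> * norm (z - a) \<le> blaschke_sup r \<rho> * norm (of_real (\<rho>\<^sup>2) - cnj a * z)"
proof -
  define D where "D = (norm (of_real (\<rho>\<^sup>2) - cnj a * z))\<^sup>2"
  define s where "s = \<rho>\<^sup>2 + r\<^sup>2"
  have s0: "0 < s"
    using r unfolding s_def by (simp add: add_pos_nonneg)
  have identity: "D - \<rho>\<^sup>2 * (norm (z - a))\<^sup>2 = (\<rho>\<^sup>2 - (norm a)\<^sup>2) * (\<rho>\<^sup>2 - (norm z)\<^sup>2)"
    unfolding D_def cmod_power2 by (simp add: power2_eq_square algebra_simps)
  have "(norm a)\<^sup>2 \<le> r\<^sup>2" "(norm z)\<^sup>2 \<le> r\<^sup>2" "r\<^sup>2 < \<rho>\<^sup>2"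
    using r az by (auto intro: power_mono power_strict_mono)
  then have "(\<rho>\<^sup>2 - r\<^sup>2)\<^sup>2 \<le> (\<rho>\<^sup>2 - (norm a)\<^sup>2) * (\<rho>\<^sup>2 - (norm z)\<^sup>2)"
    unfolding power2_eq_square[of "\<rho>\<^sup>2 - r\<^sup>2"] by (intro mult_mono) auto
  moreover have "D \<le> s\<^sup>2"
    unfolding D_def s_def using norm_blaschke_denominator_le[OF r(1) az]
    by (intro power_mono) auto
  moreover have "(blaschke_sup r \<rho>)\<^sup>2 * D = D - (\<rho>\<^sup>2 - r\<^sup>2)\<^sup>2 * (D / s\<^sup>2)"
  proof -
    have "s\<^sup>2 - (\<rho>\<^sup>2 - r\<^sup>2)\<^sup>2 = (2 * \<rho> * r)\<^sup>2"
      unfolding s_def by (simp add: power2_eq_square algebra_simps)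
    then have sup2: "(blaschke_sup r \<rho>)\<^sup>2 = 1 - (\<rho>\<^sup>2 - r\<^sup>2)\<^sup>2 / s\<^sup>2"
      using s0 unfolding blaschke_sup_def s_def[symmetric]
      by (metis diff_divide_distrib power_divide right_inverse_eq zero_less_power
          less_numeral_extra(3))
    show ?thesis
      unfolding sup2 by (simp add: algebra_simps)
  qed
  moreover have "(\<rho>\<^sup>2 - r\<^sup>2)\<^sup>2 * (D / s\<^sup>2) \<le> (\<rho>\<^sup>2 - r\<^sup>2)\<^sup>2"
    using \<open>D \<le> s\<^sup>2\<close> s0 by (intro mult_left_le) auto
  ultimately have "\<rho>\<^sup>2 * (norm (z - a))\<^sup>2 \<le> (blaschke_sup r \<rho>)\<^sup>2 * D"
    using identity by linarith
  then have "(\<rho> * norm (z - a))\<^sup>2 \<le> (blaschke_sup r \<rho> * norm (of_real (\<rho>\<^sup>2) - cnj a * z))\<^sup>2"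
    unfolding power_mult_distrib D_def by simp
  then show ?thesis
    by (rule power2_le_imp_le) (use r in \<open>auto intro!: mult_nonneg_nonneg blaschke_sup_nonneg\<close>)
qed

lemma blaschke_denominator_nonzero:
  fixes a z :: complex
  assumes "0 < r" "r < \<rho>" "norm a \<le> r" "norm z \<le> r"
  shows "of_real (\<rho>\<^sup>2) - cnj a * z \<noteq> 0"
proof
  assume "of_real (\<rho>\<^sup>2) - cnj a * z = 0"
  then have "cnj a * z = of_real (\<rho>\<^sup>2)"
    by simp
  then have "norm (cnj a * z) = \<rho>\<^sup>2"
    by (simp add: norm_power)
  moreover have "norm (cnj a * z) \<le> r * r"
    using assms by (simp add: norm_mult mult_mono)
  moreover have "r * r < \<rho>\<^sup>2"
    using assms by (simp add: power2_eq_square mult_strict_mono)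
  ultimately show False
    by simp
qed

lemma norm_blaschke_factor_le:
  fixes a z :: complex
  assumes "0 < r" "r < \<rho>" "norm a \<le> r" "norm z \<le> r"
  shows "norm ((z - a) / ((of_real (\<rho>\<^sup>2) - cnj a * z) / of_real \<rho>)) \<le> blaschke_sup r \<rho>"
proof -
  have "norm ((z - a) / ((of_real (\<rho>\<^sup>2) - cnj a * z) / of_real \<rho>))
      = \<rho> * norm (z - a) / norm (of_real (\<rho>\<^sup>2) - cnj a * z)"
    using assms by (simp only: divide_divide_eq_right norm_divide norm_mult norm_of_real)
      (simp add: mult.commute)
  moreover have "0 < norm (of_real (\<rho>\<^sup>2) - cnj a * z)"
    using blaschke_denominator_nonzero[OF assms] by simp
  ultimately show ?thesis
    using blaschke_factor_ineq[OF assms] by (simp add: divide_le_eq)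
qed

lemma norm_blaschke_factor_circle:
  fixes a t :: complex
  assumes "norm t = \<rho>"
  shows "norm (of_real (\<rho>\<^sup>2) - cnj a * t) = \<rho> * norm (t - a)"
proof -
  have "of_real (\<rho>\<^sup>2) - cnj a * t = t * cnj (t - a)"
    using complex_norm_square[of t] assms by (simp add: algebra_simps)
  then have "norm (of_real (\<rho>\<^sup>2) - cnj a * t) = norm t * norm (cnj (t - a))"
    by (simp only: norm_mult)
  then show ?thesis
    using assms by (simp only: complex_mod_cnj)
qed

lemma blaschke_estimate:
  assumes h: "h holomorphic_on ball 0 R" and r: "0 < r" "r < \<rho>" "\<rho> < R"
    and a: "a ` {..<N} \<subseteq> cball 0 r"
    and B: "\<And>t. norm t = \<rho> \<Longrightarrow> norm ((\<Prod>i<N. t - a i) * h t) \<le> B"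
    and z: "norm z \<le> r"
  shows "norm ((\<Prod>i<N. z - a i) * h z) \<le> blaschke_sup r \<rho> ^ N * B"
proof -
  \<comment> \<open>\<open>b i\<close> vanishes only at \<open>\<rho>\<^sup>2 / cnj (a i)\<close>, outside the disc, and \<open>|b i t| = |t - a i|\<close> on \<open>|t| = \<rho>\<close>\<close>
  define b where "b i w = (of_real (\<rho>\<^sup>2) - cnj (a i) * w) / of_real \<rho>" for i w
  define H where "H w = h w * (\<Prod>i<N. b i w)" for w
  have a_le: "norm (a i) \<le> r" if "i < N" for i
    using a that by auto
  have "norm (H t) \<le> B" if "norm t = \<rho>" for t
  proof -
    have "norm (b i t) = norm (t - a i)" for i
      using that r norm_blaschke_factor_circle[OF that, of "a i"]
      by (simp add: b_def norm_divide)
    then have "norm (H t) = norm ((\<Prod>i<N. t - a i) * h t)"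
      by (simp add: H_def norm_mult prod_norm[symmetric])
    with B[OF that] show ?thesis
      by simp
  qed
  then have H_frontier: "norm (H w) \<le> B" if "w \<in> frontier (cball 0 \<rho>)" for w
    using that r by simp
  have H_hol: "H holomorphic_on cball 0 \<rho>"
    unfolding H_def b_def
    by (intro holomorphic_intros holomorphic_on_subset[OF h]) (use r in auto)
  have H_z: "norm (H z) \<le> B"
  proof (rule maximum_modulus_frontier[of H "cball 0 \<rho>"])
    show "H holomorphic_on interior (cball 0 \<rho>)"
      using H_hol by (rule holomorphic_on_subset) auto
    show "continuous_on (closure (cball 0 \<rho>)) H"
      using holomorphic_on_imp_continuous_on[OF H_hol] by simp
  qed (use H_frontier z r in auto)
  have b_nz: "b i z \<noteq> 0" if "i < N" for i
    using blaschke_denominator_nonzero[OF r(1,2) a_le[OF that] z] r by (simp add: b_def)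
  have "(\<Prod>i<N. z - a i) * h z = H z * (\<Prod>i<N. (z - a i) / b i z)"
    using b_nz by (simp add: H_def prod_dividef)
  also have "norm \<dots> \<le> B * blaschke_sup r \<rho> ^ N"
  proof -
    have "norm ((z - a i) / b i z) \<le> blaschke_sup r \<rho>" if "i < N" for i
      unfolding b_def by (rule norm_blaschke_factor_le[OF r(1,2) a_le[OF that] z])
    then have "(\<Prod>i<N. norm ((z - a i) / b i z)) \<le> (\<Prod>i<N. blaschke_sup r \<rho>)"
      by (intro prod_mono) auto
    then have "norm (\<Prod>i<N. (z - a i) / b i z) \<le> blaschke_sup r \<rho> ^ N"
      by (simp add: prod_norm)
    then show ?thesis
      unfolding norm_mult using H_z by (intro mult_mono) (auto intro: order_trans[OF norm_ge_zero])
  qed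
  finally show ?thesis
    by (simp add: mult.commute)
qed

lemma zero_count_norm_bound:
  assumes g: "g holomorphic_on ball 0 R" and r: "0 < r" "r < \<rho>" "\<rho> < R"
    and zeros: "enat N \<le> zero_count g (cball 0 r)"
    and B: "\<And>t. norm t = \<rho> \<Longrightarrow> norm (g t) \<le> B"
    and z: "norm z \<le> r"
  shows "norm (g z) \<le> blaschke_sup r \<rho> ^ N * B"
proof -
  have "cball 0 r \<subseteq> ball 0 R"
    using r by auto
  then obtain a h where factor: "a ` {..<N} \<subseteq> cball 0 r" "h holomorphic_on ball 0 R"
      "\<And>w. w \<in> ball 0 R \<Longrightarrow> g w = (\<Prod>i<N. w - a i) * h w"
    using zero_count_factor[OF open_ball g _ zeros] by blast
  have "norm ((\<Prod>i<N. t - a i) * h t) \<le> B" if "norm t = \<rho>" for t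
    using B[OF that] factor(3)[of t] that r by simp
  then show ?thesis
    using blaschke_estimate[OF factor(2) r factor(1) _ z] factor(3)[of z] z r by simp
qed

section \<open>Taylor coefficients of functions close to polynomials\<close>

lemma higher_deriv_poly: "(deriv ^^ j) (poly p) = poly ((pderiv ^^ j) (p :: complex poly))"
proof (induction j)
  case (Suc j)
  have "deriv (poly q) = poly (pderiv q)" for q :: "complex poly"
    by (rule ext, rule DERIV_imp_deriv, rule poly_DERIV)
  with Suc show ?case
    by simp
qed simp

lemma higher_pderiv_eq_0: "degree p < j \<Longrightarrow> (pderiv ^^ j) p = 0"
  by (rule poly_eqI) (simp add: coeff_higher_pderiv coeff_eq_0)

lemma coeff_eq_higher_deriv: "coeff p i = (deriv ^^ i) (poly p) 0 / fact i"
  for p :: "complex poly"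
  by (simp add: higher_deriv_poly poly_0_coeff_0 coeff_higher_pderiv pochhammer_fact[symmetric])

lemma norm_poly_le_outside_circle:
  fixes p :: "complex poly"
  assumes "degree p \<le> n" "0 < r" "r \<le> \<rho>"
    and circle: "\<And>z. norm z = r \<Longrightarrow> norm (poly p z) \<le> P"
    and t: "norm t \<le> \<rho>"
  shows "norm (poly p t) \<le> (real n + 1) * P * (\<rho> / r) ^ n"
proof -
  have P: "0 \<le> P"
    using circle[of "of_real r"] assms(2) by (metis norm_ge_zero norm_of_real abs_of_pos order_trans)
  have coeff: "norm (coeff p i) \<le> P / r ^ i" for i
  proof -
    have "norm ((deriv ^^ i) (poly p) 0) \<le> fact i * P / r ^ i"
      by (rule Cauchy_inequality)
         (use assms in \<open>auto intro!: holomorphic_intros continuous_intros simp: norm_minus_commute\<close>)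
    then show ?thesis
      by (simp add: coeff_eq_higher_deriv norm_divide field_simps)
  qed
  have "norm (poly p t) \<le> (\<Sum>i\<le>degree p. norm (coeff p i * t ^ i))"
    unfolding poly_altdef by (rule norm_sum)
  also have "\<dots> \<le> (\<Sum>i\<le>degree p. P * (\<rho> / r) ^ n)"
  proof (rule sum_mono)
    fix i assume i: "i \<in> {..degree p}"
    have "norm (coeff p i * t ^ i) \<le> P / r ^ i * \<rho> ^ i"
      unfolding norm_mult norm_power
      by (intro mult_mono coeff power_mono t) (use P assms in auto)
    also have "\<dots> = P * (\<rho> / r) ^ i"
      by (simp add: power_divide)
    also have "\<dots> \<le> P * (\<rho> / r) ^ n"
      by (intro mult_left_mono power_increasing) (use i assms P in auto)
    finally show "norm (coeff p i * t ^ i) \<le> P * (\<rho> / r) ^ n" .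
  qed
  also have "\<dots> \<le> (real n + 1) * (P * (\<rho> / r) ^ n)"
    using assms P by (simp add: mult_right_mono)
  finally show ?thesis
    by (simp only: mult.assoc)
qed

lemma absorb_le:
  fixes A E c t :: real
  assumes E: "E \<le> t * (A + c * (A + E))" and small: "t * c \<le> 1 / 2"
    and "1 \<le> c" "0 \<le> t" "0 \<le> A"
  shows "E \<le> 4 * A * c * t"
proof -
  have "t * A \<le> (t * c) * A"
    using assms(3-5) mult_left_mono[of 1 c t] by (simp add: mult_right_mono)
  moreover have "(t * c) * E \<le> E / 2" if "0 \<le> E"
    using mult_right_mono[OF small that] by simp
  moreover have "t * (A + c * (A + E)) = t * A + (t * c) * A + (t * c) * E"
    by (simp add: algebra_simps)
  moreover have "0 \<le> (t * c) * A"
    using assms(3-5) by simp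
  ultimately have "E \<le> 4 * ((t * c) * A)"
    using E by (cases "0 \<le> E") linarith+
  then show ?thesis
    by (simp add: mult_ac)
qed

text \<open>Let \<open>E\<close> be the maximum of \<open>|F - p|\<close> on the disc of radius \<open>r\<close>. Then \<open>|p| \<le> A + E\<close> on
  \<open>|z| = r\<close>, so \<open>|F - p| \<le> A + c (A + E)\<close> on \<open>|z| = \<rho>\<close>, and since \<open>F - p\<close> has \<open>N\<close> zeros in the
  small disc the Blaschke estimate gives \<open>E \<le> \<theta>\<^sup>N (A + c (A + E))\<close>; the smallness
  hypothesis lets the \<open>E\<close> on the right be absorbed.\<close>
lemma approximation_error_bound:
  assumes holF: "F holomorphic_on ball 0 R" and r: "0 < r" "r < \<rho>" "\<rho> < R"
    and deg: "degree p \<le> n"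
    and A: "\<And>t. norm t \<le> \<rho> \<Longrightarrow> norm (F t) \<le> A"
    and zeros: "enat N \<le> zero_count (\<lambda>w. F w - poly p w) (cball 0 r)"
    and small: "blaschke_sup r \<rho> ^ N * ((real n + 1) * (\<rho> / r) ^ n) \<le> 1 / 2"
    and z: "norm z \<le> r"
  shows "norm (F z - poly p z) \<le> 4 * A * ((real n + 1) * (\<rho> / r) ^ n) * blaschke_sup r \<rho> ^ N"
proof -
  define g where "g w = F w - poly p w" for w
  define c where "c = (real n + 1) * (\<rho> / r) ^ n"
  have holg: "g holomorphic_on ball 0 R"
    unfolding g_def by (intro holomorphic_intros holF)
  obtain z0 where z0: "norm z0 \<le> r" "\<And>w. norm w \<le> r \<Longrightarrow> norm (g w) \<le> norm (g z0)"
  proof -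
    have "continuous_on (cball 0 r) g"
      using holomorphic_on_imp_continuous_on[OF holg] by (rule continuous_on_subset) (use r in auto)
    then have "\<exists>x\<in>cball 0 r. \<forall>y\<in>cball 0 r. norm (g y) \<le> norm (g x)"
      using r by (intro continuous_attains_sup) (auto intro: continuous_intros)
    with that show thesis
      by auto
  qed
  define E where "E = norm (g z0)"
  have "norm (poly p w) \<le> A + E" if "norm w = r" for w
    using A[of w] z0(2)[of w] that r norm_triangle_ineq4[of "F w" "g w"] unfolding E_def g_def
    by simp
  then have "norm (poly p t) \<le> c * (A + E)" if "norm t = \<rho>" for t
    using norm_poly_le_outside_circle[OF deg r(1) less_imp_le[OF r(2)]] that
    unfolding c_def by (simp add: mult_ac)
  then have g_circle: "norm (g t) \<le> A + c * (A + E)" if "norm t = \<rho>" for t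
    using A[of t] that norm_triangle_ineq4[of "F t" "poly p t"] unfolding g_def by force
  have "E \<le> blaschke_sup r \<rho> ^ N * (A + c * (A + E))"
    using zero_count_norm_bound[OF holg r zeros[folded g_def] g_circle z0(1)] by (simp add: E_def)
  moreover have "1 \<le> c"
    using mult_mono[of 1 "real n + 1" 1 "(\<rho> / r) ^ n"] r unfolding c_def by (simp add: one_le_power)
  moreover have "0 \<le> A"
    using A[of 0] r norm_ge_zero order_trans by (metis norm_zero order_less_imp_le)
  ultimately have "E \<le> 4 * A * c * blaschke_sup r \<rho> ^ N"
    using small r by (intro absorb_le) (auto simp: c_def blaschke_sup_nonneg)
  then show ?thesis
    using z0(2)[OF z] unfolding E_def g_def c_def by simp
qed

lemma taylor_coeff_bound:
  assumes holF: "F holomorphic_on ball 0 R" and r: "0 < r" "r < \<rho>" "\<rho> < R"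
    and deg: "degree p \<le> n"
    and A: "\<And>t. norm t \<le> \<rho> \<Longrightarrow> norm (F t) \<le> A"
    and zeros: "enat N \<le> zero_count (\<lambda>w. F w - poly p w) (cball 0 r)"
    and small: "blaschke_sup r \<rho> ^ N * ((real n + 1) * (\<rho> / r) ^ n) \<le> 1 / 2"
    and j: "n < j"
  shows "norm ((deriv ^^ j) F 0) / fact j * r ^ j
           \<le> 4 * A * ((real n + 1) * (\<rho> / r) ^ n) * blaschke_sup r \<rho> ^ N"
proof -
  let ?g = "\<lambda>w. F w - poly p w"
  let ?E = "4 * A * ((real n + 1) * (\<rho> / r) ^ n) * blaschke_sup r \<rho> ^ N"
  have holg: "?g holomorphic_on ball 0 R"
    by (intro holomorphic_intros holF)
  have "(deriv ^^ j) ?g 0 = (deriv ^^ j) F 0"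
    using higher_deriv_diff[OF holF poly_holomorphic_on[OF holomorphic_on_id]] r deg j
    by (simp add: higher_deriv_poly higher_pderiv_eq_0)
  moreover have "norm ((deriv ^^ j) ?g 0) \<le> fact j * ?E / r ^ j"
  proof (rule Cauchy_inequality)
    show "?g holomorphic_on ball 0 r"
      by (rule holomorphic_on_subset[OF holg]) (use r in auto)
    show "continuous_on (cball 0 r) ?g"
      using holomorphic_on_imp_continuous_on[OF holg] by (rule continuous_on_subset) (use r in auto)
    show "norm (?g w) \<le> ?E" if "norm (0 - w) = r" for w
      using approximation_error_bound[OF assms(1-8), of w] that by simp
  qed (use r in auto)
  ultimately show ?thesis
    using r by (simp add: field_simps)
qed

lemma taylor_coeff_bound_geometric:
  assumes holF: "F holomorphic_on ball 0 R" and r: "0 < r" "r < \<rho>" "\<rho> < R"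
    and deg: "degree p \<le> n"
    and A: "\<And>t. norm t \<le> \<rho> \<Longrightarrow> norm (F t) \<le> A"
    and zeros: "enat (M * n) \<le> zero_count (\<lambda>w. F w - poly p w) (cball 0 r)"
    and q: "blaschke_sup r \<rho> ^ M * (\<rho> / r) \<le> q" and small: "(real n + 1) * q ^ n \<le> 1 / 2"
    and j: "n < j"
  shows "norm ((deriv ^^ j) F 0) / fact j * r ^ j \<le> 4 * A * (real n + 1) * q ^ n"
proof -
  define \<theta> where "\<theta> = blaschke_sup r \<rho>"
  have "0 \<le> \<theta> ^ M * (\<rho> / r)"
    using r by (simp add: \<theta>_def blaschke_sup_nonneg)
  then have "\<theta> ^ (M * n) * (\<rho> / r) ^ n \<le> q ^ n"
    using power_mono[OF q[folded \<theta>_def], of n] by (simp only: power_mult power_mult_distrib)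
  then have le_q: "(real n + 1) * (\<theta> ^ (M * n) * (\<rho> / r) ^ n) \<le> (real n + 1) * q ^ n"
    by (intro mult_left_mono) auto
  have "0 \<le> A"
    using A[of 0] r norm_ge_zero order_trans by (metis norm_zero order_less_imp_le)
  have "\<theta> ^ (M * n) * ((real n + 1) * (\<rho> / r) ^ n) \<le> 1 / 2"
    using order_trans[OF le_q small] by (simp add: mult_ac)
  then have "norm ((deriv ^^ j) F 0) / fact j * r ^ j
      \<le> 4 * A * ((real n + 1) * (\<rho> / r) ^ n) * \<theta> ^ (M * n)"
    using taylor_coeff_bound[OF holF r deg A zeros _ j] unfolding \<theta>_def by blast
  also have "\<dots> = 4 * A * ((real n + 1) * (\<theta> ^ (M * n) * (\<rho> / r) ^ n))"
    by (simp add: mult_ac)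
  also have "\<dots> \<le> 4 * A * ((real n + 1) * q ^ n)"
    using le_q \<open>0 \<le> A\<close> by (intro mult_left_mono) auto
  finally show ?thesis
    by (simp add: mult_ac)
qed

section \<open>Extension to an entire function\<close>

lemma eventually_linear_le_two_power: "eventually (\<lambda>n. c * (real n + 1) \<le> 2 ^ n) sequentially"
proof -
  have "(\<lambda>n. real n / 2 ^ n + 1 / 2 ^ n) \<longlonglongrightarrow> 0 + 0"
    by (intro tendsto_add lim_n_over_pown LIMSEQ_divide_realpow_zero) auto
  then have "(\<lambda>n. (real n + 1) / 2 ^ n) \<longlonglongrightarrow> 0"
    by (simp add: add_divide_distrib)
  then have "eventually (\<lambda>n. (real n + 1) / 2 ^ n < 1 / (\<bar>c\<bar> + 1)) sequentially"
    by (rule order_tendstoD) simp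
  then show ?thesis
  proof eventually_elim
    case (elim n)
    then have "(\<bar>c\<bar> + 1) * (real n + 1) < 2 ^ n"
      by (simp add: field_simps)
    moreover have "c * (real n + 1) \<le> (\<bar>c\<bar> + 1) * (real n + 1)"
      by (intro mult_right_mono) auto
    ultimately show ?case
      by linarith
  qed
qed

lemma exists_pow_mult_le:
  fixes \<theta> q \<epsilon> :: real
  assumes "0 \<le> \<theta>" "\<theta> < 1" "0 < q" "0 < \<epsilon>"
  obtains M where "\<theta> ^ M * q \<le> \<epsilon>"
proof -
  obtain M where "\<theta> ^ M < \<epsilon> / q"
    using real_arch_pow_inv[of "\<epsilon> / q" \<theta>] assms by auto
  then have "\<theta> ^ M * q < \<epsilon>"
    using assms(3) by (simp only: pos_less_divide_eq)
  then show thesis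
    by (intro that[of M] less_imp_le)
qed

lemma holomorphic_bounded_on_cball:
  assumes "f holomorphic_on ball 0 R" "\<rho> < R"
  obtains A where "1 \<le> A" "\<And>t. norm t \<le> \<rho> \<Longrightarrow> norm (f t) \<le> A"
proof -
  have "compact (f ` cball 0 \<rho>)"
    by (intro compact_continuous_image holomorphic_on_imp_continuous_on
        holomorphic_on_subset[OF assms(1)]) (use assms(2) in auto)
  then obtain B where "\<forall>y\<in>f ` cball 0 \<rho>. norm y \<le> B"
    using compact_imp_bounded bounded_iff by metis
  then show thesis
    by (intro that[of "max B 1"]) (auto simp: le_max_iff_disj)
qed

lemma taylor_coeffs_decay:
  assumes holf: "f holomorphic_on ball 0 R" and r: "0 < r" "r < R"
    and zeros: "superlinear_zeros f (cball 0 r) D" and \<mu>: "0 < \<mu>"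
  shows "eventually (\<lambda>j. norm ((deriv ^^ j) f 0 / fact j) * r ^ j \<le> \<mu> ^ j) sequentially"
proof -
  define \<rho> where "\<rho> = (r + R) / 2"
  have \<rho>: "r < \<rho>" "\<rho> < R"
    using r by (auto simp: \<rho>_def)
  obtain A where A1: "1 \<le> A" and A: "\<And>t. norm t \<le> \<rho> \<Longrightarrow> norm (f t) \<le> A"
    using holomorphic_bounded_on_cball[OF holf \<rho>(2)] by blast
  define \<theta> where "\<theta> = blaschke_sup r \<rho>"
  define \<nu> where "\<nu> = min \<mu> 1 / 2"
  have \<nu>: "0 < \<nu>" "\<nu> \<le> \<mu>" "\<nu> \<le> 1 / 2"
    using \<mu> by (auto simp: \<nu>_def)
  have \<theta>: "0 \<le> \<theta>" "\<theta> < 1"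
    using r \<rho> by (auto simp: \<theta>_def intro: blaschke_sup_nonneg blaschke_sup_less_1)
  obtain M where M: "\<theta> ^ M * (\<rho> / r) \<le> \<nu> ^ Suc D"
    using exists_pow_mult_le[OF \<theta>, of "\<rho> / r" "\<nu> ^ Suc D"] r \<rho> \<nu> by auto
  obtain L where L: "\<And>n. L \<le> n \<Longrightarrow> 4 * A * (real n + 1) \<le> 2 ^ n"
    using eventually_linear_le_two_power[of "4 * A"] unfolding eventually_sequentially by blast
  from zeros[unfolded superlinear_zeros_def, rule_format, of L M]
  show ?thesis
  proof eventually_elim
    case (elim j)
    then obtain n p where n: "L \<le> n" "n < j" "j \<le> D * n" and p: "degree p \<le> n"
        "enat (M * n) \<le> zero_count (\<lambda>z. f z - poly p z) (cball 0 r)"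
      by blast
    have "(\<nu> ^ Suc D) ^ n = \<nu> ^ (D * n) * \<nu> ^ n"
      by (simp only: power_mult[symmetric] power_add[symmetric]) (simp add: add.commute)
    also have "\<dots> \<le> \<nu> ^ j * (1 / 2) ^ n"
      by (intro mult_mono power_decreasing power_mono) (use n \<nu> in auto)
    finally have "4 * A * (real n + 1) * (\<nu> ^ Suc D) ^ n \<le> 4 * A * (real n + 1) * (\<nu> ^ j * (1 / 2) ^ n)"
      by (intro mult_left_mono) (use A1 in auto)
    also have "\<dots> = 4 * A * (real n + 1) / 2 ^ n * \<nu> ^ j"
      by (simp add: power_one_over)
    also have "\<dots> \<le> 1 * \<nu> ^ j"
      using L[OF n(1)] \<nu> by (intro mult_right_mono) auto
    finally have bound: "4 * A * (real n + 1) * (\<nu> ^ Suc D) ^ n \<le> \<nu> ^ j"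
      by simp
    have "1 * ((real n + 1) * (\<nu> ^ Suc D) ^ n) \<le> (4 * A) * ((real n + 1) * (\<nu> ^ Suc D) ^ n)"
      using A1 \<nu> by (intro mult_right_mono) auto
    also have "\<dots> \<le> \<nu> ^ j"
      using bound by (simp only: mult.assoc)
    also have "\<dots> \<le> \<nu> ^ 1"
      by (rule power_decreasing) (use n \<nu> in auto)
    finally have small: "(real n + 1) * (\<nu> ^ Suc D) ^ n \<le> 1 / 2"
      using \<nu> by simp
    have "norm ((deriv ^^ j) f 0) / fact j * r ^ j \<le> 4 * A * (real n + 1) * (\<nu> ^ Suc D) ^ n"
      by (rule taylor_coeff_bound_geometric[OF holf r(1) \<rho> p(1) A p(2) M[unfolded \<theta>_def] small n(2)])
    also have "\<dots> \<le> \<mu> ^ j"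
      using bound power_mono[OF \<nu>(2), of j] \<nu> by simp
    finally show ?case
      by (simp add: norm_divide)
  qed
qed

lemma summable_power_series_if_decay:
  fixes a :: "nat \<Rightarrow> 'a::{real_normed_div_algebra, banach}"
  assumes r: "0 < r"
    and decay: "\<And>\<mu>. 0 < \<mu> \<Longrightarrow> eventually (\<lambda>j. norm (a j) * r ^ j \<le> \<mu> ^ j) sequentially"
  shows "summable (\<lambda>j. a j * z ^ j)"
proof -
  define \<mu> where "\<mu> = r / (2 * (norm z + 1))"
  have "0 < 2 * (norm z + 1)"
    by (simp add: add_nonneg_pos)
  then have \<mu>: "0 < \<mu>" "\<mu> * norm z / r \<le> 1 / 2"
    using r by (simp_all add: \<mu>_def divide_le_eq)
  have "eventually (\<lambda>j. norm (a j * z ^ j) \<le> (1 / 2) ^ j) sequentially"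
    using decay[OF \<mu>(1)]
  proof eventually_elim
    case (elim j)
    have "norm (a j * z ^ j) = norm (a j) * r ^ j * (norm z / r) ^ j"
      using r by (simp add: norm_mult norm_power power_divide)
    also have "\<dots> \<le> \<mu> ^ j * (norm z / r) ^ j"
      by (rule mult_right_mono[OF elim]) (use r in simp)
    also have "\<dots> = (\<mu> * norm z / r) ^ j"
      by (simp add: power_mult_distrib[symmetric])
    also have "\<dots> \<le> (1 / 2) ^ j"
      by (rule power_mono[OF \<mu>(2)]) (use \<mu> r in simp)
    finally show ?case .
  qed
  then show ?thesis
    by (rule summable_comparison_test_ev) simp
qed

lemma entire_extension_if_taylor_decay:
  assumes holf: "f holomorphic_on ball 0 R" and r: "0 < r"
    and decay: "\<And>\<mu>. 0 < \<mu> \<Longrightarrow>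
      eventually (\<lambda>j. norm ((deriv ^^ j) f 0 / fact j) * r ^ j \<le> \<mu> ^ j) sequentially"
  obtains F where "F holomorphic_on UNIV" "\<And>z. z \<in> ball 0 R \<Longrightarrow> F z = f z"
proof -
  define a where "a j = (deriv ^^ j) f 0 / fact j" for j
  have sums: "(\<lambda>j. a j * z ^ j) sums (\<Sum>j. a j * z ^ j)" for z
    using summable_power_series_if_decay[OF r decay] unfolding a_def by (rule summable_sums)
  define F where "F z = (\<Sum>j. a j * z ^ j)" for z
  show thesis
  proof
    have hol_ball: "F holomorphic_on ball 0 (norm z + 1)" for z
      by (rule power_series_holomorphic) (use sums in \<open>simp add: F_def\<close>)
    have "F field_differentiable (at z)" for z
      by (rule holomorphic_on_imp_differentiable_at[OF hol_ball[of z]]) auto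
    then show "F holomorphic_on UNIV"
      by (simp add: holomorphic_on_def field_differentiable_at_within)
    show "F z = f z" if "z \<in> ball 0 R" for z
      using holomorphic_power_series[OF holf that] sums[of z] sums_unique2
      unfolding F_def a_def by simp
  qed
qed

section \<open>Entire functions with many contact points\<close>

lemma tendsto_zero_attains_max:
  fixes g :: "nat \<Rightarrow> real"
  assumes lim: "g \<longlonglongrightarrow> 0" and nonneg: "\<And>i. 0 \<le> g i"
  obtains j where "\<And>i. g i \<le> g j"
proof (cases "\<forall>i. g i = 0")
  case True
  then show thesis
    using that[of 0] by simp
next
  case False
  then obtain m where m: "0 < g m"
    using nonneg by (metis less_eq_real_def)
  obtain N where N: "\<And>i. N \<le> i \<Longrightarrow> g i < g m"
    using order_tendstoD(2)[OF lim m] unfolding eventually_sequentially by blast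
  define K where "K = max N m"
  have "Max (g ` {..K}) \<in> g ` {..K}"
    by (rule Max_in) auto
  then obtain j where j: "j \<in> {..K}" "Max (g ` {..K}) = g j"
    by (rule imageE)
  have below: "g i \<le> g j" if "i \<le> K" for i
    using that j(2)[symmetric] by simp
  show thesis
  proof (rule that)
    fix i
    show "g i \<le> g j"
      using below[of i] below[of m] N[of i] by (cases "i \<le> K") (auto simp: K_def not_le)
  qed
qed

lemma max_term_beyond:
  fixes a :: "nat \<Rightarrow> 'a::real_normed_vector"
  assumes summable: "\<And>R. 0 \<le> R \<Longrightarrow> summable (\<lambda>i. norm (a i) * R ^ i)"
    and m: "J < m" "a m \<noteq> 0"
  obtains R j where "Rmin \<le> R" "1 \<le> R" "J < j" "\<And>i. norm (a i) * R ^ i \<le> norm (a j) * R ^ j"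
proof -
  define B where "B = (\<Sum>i\<le>J. norm (a i))"
  define R where "R = max Rmin (max 1 (B / norm (a m) + 1))"
  have "norm (a m) * (B / norm (a m) + 1) \<le> norm (a m) * R"
    by (intro mult_left_mono) (auto simp: R_def)
  moreover have "norm (a m) * (B / norm (a m) + 1) = B + norm (a m)"
    using m(2) by (simp add: distrib_left)
  moreover have "0 < norm (a m)"
    using m(2) by simp
  ultimately have "B < norm (a m) * R"
    by linarith
  then have R: "Rmin \<le> R" "1 \<le> R" "B < norm (a m) * R"
    by (auto simp: R_def)
  define g where "g i = norm (a i) * R ^ i" for i
  obtain j where j: "\<And>i. g i \<le> g j"
    using tendsto_zero_attains_max[of g] summable_LIMSEQ_zero[OF summable] R(2)
    unfolding g_def by force
  have "J < j"
  proof (rule ccontr)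
    assume "\<not> J < j"
    then have "g j \<le> B * R ^ J"
      unfolding g_def B_def using R(2)
      by (intro mult_mono member_le_sum power_increasing) (auto intro: sum_nonneg)
    also have "\<dots> < norm (a m) * R * R ^ J"
      using R by simp
    also have "\<dots> \<le> g m"
      unfolding g_def using m R(2)
      by (simp add: mult.assoc power_Suc[symmetric] power_increasing del: power_Suc)
    finally show False
      using j[of m] by simp
  qed
  with R j show thesis
    using that unfolding g_def by blast
qed

lemma norm_suminf_le_twice_max_term:
  fixes a :: "nat \<Rightarrow> 'a::{real_normed_div_algebra, banach}"
  assumes t: "norm t \<le> R / 2" and B: "\<And>i. norm (a i) * R ^ i \<le> B"
  shows "norm (\<Sum>i. a i * t ^ i) \<le> 2 * B"
proof -
  have bound: "norm (a i * t ^ i) \<le> B * (1 / 2) ^ i" for i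
  proof -
    have "norm (a i * t ^ i) \<le> norm (a i) * (R / 2) ^ i"
      unfolding norm_mult norm_power by (intro mult_left_mono power_mono t) auto
    also have "\<dots> = norm (a i) * R ^ i * (1 / 2) ^ i"
      by (simp add: power_divide)
    also have "\<dots> \<le> B * (1 / 2) ^ i"
      by (intro mult_right_mono B) auto
    finally show ?thesis .
  qed
  have geometric: "summable (\<lambda>i. B * (1 / 2 :: real) ^ i)"
    by (intro summable_mult summable_geometric) simp
  have summable: "summable (\<lambda>i. norm (a i * t ^ i))"
    by (rule summable_comparison_test[OF _ geometric]) (use bound in auto)
  have "norm (\<Sum>i. a i * t ^ i) \<le> (\<Sum>i. norm (a i * t ^ i))"
    by (rule summable_norm[OF summable])
  also have "\<dots> \<le> (\<Sum>i. B * (1 / 2) ^ i)"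
    by (rule suminf_le[OF bound summable geometric])
  also have "\<dots> = 2 * B"
    by (simp add: suminf_mult suminf_geometric)
  finally show ?thesis .
qed

lemma power_product_le:
  fixes x \<theta> :: real
  assumes n: "1 \<le> n" and j: "j \<le> D * n" and x: "16 * 4 ^ (D + 2) \<le> x"
    and \<theta>: "0 \<le> \<theta>" "\<theta> \<le> 4 / x"
  shows "(real n + 1) * x ^ j * (\<theta> ^ (D + 2) * (x / 2)) ^ n \<le> 1 / 16"
proof -
  have x1: "1 \<le> x"
    using x by (smt (verit) one_le_power)
  have "x ^ j * (\<theta> ^ (D + 2) * (x / 2)) ^ n \<le> x ^ (D * n) * ((4 / x) ^ (D + 2) * (x / 2)) ^ n"
    using x1 \<theta> by (intro mult_mono power_increasing power_mono j) auto
  also have "\<dots> = (x ^ D * (x / 2) * (4 / x) ^ (D + 2)) ^ n"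
    by (simp only: power_mult power_mult_distrib mult_ac)
  also have "x ^ D * (x / 2) * (4 / x) ^ (D + 2) = 4 ^ (D + 2) / (2 * x)"
    using x1 by (simp add: power_divide field_simps power_add)
  also have "(4 ^ (D + 2) / (2 * x)) ^ n \<le> (1 / 32 :: real) ^ n"
    using x x1 by (intro power_mono) (auto simp: divide_le_eq)
  finally have "x ^ j * (\<theta> ^ (D + 2) * (x / 2)) ^ n \<le> (1 / 32) ^ n" .
  moreover have "real n + 1 \<le> 2 ^ n"
  proof -
    have "Suc n \<le> 2 ^ n"
      by (rule Suc_leI) simp
    then have "real (Suc n) \<le> real (2 ^ n)"
      by (simp only: of_nat_le_iff)
    then show ?thesis
      by simp
  qed
  ultimately have "(real n + 1) * (x ^ j * (\<theta> ^ (D + 2) * (x / 2)) ^ n) \<le> 2 ^ n * (1 / 32) ^ n"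
    using x1 \<theta> by (intro mult_mono) auto
  also have "\<dots> = (1 / 16) ^ n"
    by (simp add: power_mult_distrib[symmetric])
  also have "\<dots> \<le> 1 / 16"
    using n by (simp add: power_le_one_iff power_decreasing[of 1 n "1 / 16 :: real", simplified])
  finally show ?thesis
    by (simp add: mult.assoc)
qed

lemma central_taylor_coeff_eq_0:
  assumes holF: "F holomorphic_on UNIV" and r: "0 < r" and R: "16 * 4 ^ (D + 2) * r \<le> R"
    and max: "\<And>i. norm ((deriv ^^ i) F 0 / fact i) * R ^ i \<le> norm ((deriv ^^ j) F 0 / fact j) * R ^ j"
    and n: "1 \<le> n" "n < j" "j \<le> D * n" and deg: "degree p \<le> n"
    and zeros: "enat ((D + 2) * n) \<le> zero_count (\<lambda>z. F z - poly p z) (cball 0 r)"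
  shows "(deriv ^^ j) F 0 = 0"
proof (rule ccontr)
  assume nz: "(deriv ^^ j) F 0 \<noteq> 0"
  define a where "a i = (deriv ^^ i) F 0 / fact i" for i
  define x where "x = R / r"
  define \<rho> where "\<rho> = R / 2"
  define \<theta> where "\<theta> = blaschke_sup r \<rho>"
  define P where "P = norm (a j) * r ^ j"
  have "16 * 1 * r \<le> 16 * 4 ^ (D + 2) * r"
    using r by (intro mult_right_mono mult_left_mono one_le_power) auto
  from order_trans[OF this R] have R16: "16 * r \<le> R"
    by simp
  have x: "16 * 4 ^ (D + 2) \<le> x" "x * r = R" "1 \<le> x"
    using R R16 r by (simp_all add: x_def field_simps)
  have \<rho>: "r < \<rho>" "\<rho> < R" "\<rho> / r = x / 2"
    using R16 r by (simp_all add: \<rho>_def x_def)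
  have \<theta>: "0 \<le> \<theta>" "\<theta> \<le> 4 / x"
    using blaschke_sup_le[of r \<rho>] blaschke_sup_nonneg[of r \<rho>] r \<rho>
    by (auto simp: \<theta>_def \<rho>_def x_def)
  have balance: "(real n + 1) * x ^ j * (\<theta> ^ (D + 2) * (x / 2)) ^ n \<le> 1 / 16"
    by (rule power_product_le[OF n(1,3) x(1) \<theta>])
  have "P * x ^ j = norm (a j) * R ^ j"
    unfolding P_def x(2)[symmetric] by (simp add: power_mult_distrib)
  moreover have "F t = (\<Sum>i. a i * t ^ i)" for t
    using holomorphic_power_series[of F 0 "norm t + 1" t] holF
    by (simp add: a_def holomorphic_on_subset sums_iff)
  ultimately have F_bound: "norm (F t) \<le> 2 * (P * x ^ j)" if "norm t \<le> \<rho>" for t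
    using norm_suminf_le_twice_max_term[of t R a "norm (a j) * R ^ j"] that max
    unfolding \<rho>_def a_def by simp
  have "(real n + 1) * 1 \<le> (real n + 1) * x ^ j"
    using x(3) by (intro mult_left_mono one_le_power) auto
  then have "(real n + 1) * 1 * (\<theta> ^ (D + 2) * (x / 2)) ^ n
      \<le> (real n + 1) * x ^ j * (\<theta> ^ (D + 2) * (x / 2)) ^ n"
    by (rule mult_right_mono) (use x(3) \<theta> in simp)
  with balance have small: "(real n + 1) * (\<theta> ^ (D + 2) * (x / 2)) ^ n \<le> 1 / 2"
    by linarith
  have "P \<le> 4 * (2 * (P * x ^ j)) * (real n + 1) * (\<theta> ^ (D + 2) * (x / 2)) ^ n"
    using taylor_coeff_bound_geometric[OF holomorphic_on_subset[OF holF subset_UNIV] r \<rho>(1,2) deg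
        F_bound zeros _ small n(2)] \<rho>(3)
    unfolding P_def a_def \<theta>_def by (simp add: norm_divide)
  also have "\<dots> = 8 * P * ((real n + 1) * x ^ j * (\<theta> ^ (D + 2) * (x / 2)) ^ n)"
    by (simp add: mult_ac)
  also have "\<dots> \<le> 8 * P * (1 / 16)"
    using r balance by (intro mult_left_mono) (auto simp: P_def)
  finally show False
    using nz r by (simp add: P_def a_def)
qed

lemma entire_eq_poly_if_higher_deriv_eq_0:
  assumes "F holomorphic_on UNIV" "\<And>m. J < m \<Longrightarrow> (deriv ^^ m) F 0 = 0"
  shows "F z = poly (\<Sum>i\<le>J. monom ((deriv ^^ i) F 0 / fact i) i) z"
proof -
  have "(\<lambda>i. (deriv ^^ i) F 0 / fact i * z ^ i) sums F z"
    using holomorphic_power_series[of F 0 "norm z + 1" z] assms(1)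
    by (simp add: holomorphic_on_subset)
  moreover have "(\<lambda>i. (deriv ^^ i) F 0 / fact i * z ^ i) sums (\<Sum>i\<le>J. (deriv ^^ i) F 0 / fact i * z ^ i)"
    by (rule sums_finite) (use assms(2) in \<open>auto simp: not_le\<close>)
  ultimately show ?thesis
    by (simp add: sums_unique2 poly_sum poly_monom)
qed

lemma entire_poly_if_superlinear_zeros:
  assumes holF: "F holomorphic_on UNIV" and r: "0 < r"
    and zeros: "superlinear_zeros F (cball 0 r) D"
  obtains p where "\<And>z. F z = poly p z"
proof (cases "\<exists>J. \<forall>m>J. (deriv ^^ m) F 0 = 0")
  case True
  then show thesis
    using entire_eq_poly_if_higher_deriv_eq_0[OF holF] that by blast
next
  case False
  define a where "a i = (deriv ^^ i) F 0 / fact i" for i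
  obtain J where J: "\<And>j. J \<le> j \<Longrightarrow> \<exists>n p. 1 \<le> n \<and> n < j \<and> j \<le> D * n \<and> degree p \<le> n \<and>
      enat ((D + 2) * n) \<le> zero_count (\<lambda>z. F z - poly p z) (cball 0 r)"
    using zeros unfolding superlinear_zeros_def eventually_sequentially by blast
  obtain m where m: "J < m" "a m \<noteq> 0"
    using False by (auto simp: a_def)
  have summable: "summable (\<lambda>i. norm (a i) * R ^ i)" if "0 \<le> R" for R
  proof -
    have "(\<lambda>i. a i * of_real (R + 1) ^ i) sums F (of_real (R + 1))"
      using holomorphic_power_series[of F 0 "R + 2" "of_real (R + 1)"] holF that
      by (simp add: a_def holomorphic_on_subset)
    from powser_insidea[OF sums_summable[OF this], of "of_real R"] that show ?thesis
      by (simp add: norm_mult norm_power)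
  qed
  obtain R j where R: "16 * 4 ^ (D + 2) * r \<le> R" "1 \<le> R" and j: "J < j"
    and max: "\<And>i. norm (a i) * R ^ i \<le> norm (a j) * R ^ j"
    using max_term_beyond[OF summable m, where Rmin = "16 * 4 ^ (D + 2) * r"] by blast
  obtain n p where "1 \<le> n" "n < j" "j \<le> D * n" "degree p \<le> n"
      "enat ((D + 2) * n) \<le> zero_count (\<lambda>z. F z - poly p z) (cball 0 r)"
    using J[of j] j by auto
  then have "a j = 0"
    using central_taylor_coeff_eq_0[OF holF r R(1) max[unfolded a_def]] by (simp add: a_def)
  moreover have "0 < norm (a m) * R ^ m"
    using m(2) R(2) by simp
  ultimately show thesis
    using max[of m] by simp
qed

theorem corollary2p3:
  fixes nk :: "nat \<Rightarrow> nat" and C :: real and f :: "complex \<Rightarrow> complex" and r :: real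
  assumes "strict_mono nk"
    and "\<forall>k. real (nk (Suc k)) / real (nk k) \<le> C"
    and "f holomorphic_on ball 0 1"
    and "0 < r" and "r < 1"
    and "((\<lambda>k. ereal_of_enat (NK f (cball 0 r) (nk k)) / ereal (real (nk k)))
            \<longlongrightarrow> \<infinity>) sequentially"
  shows "\<exists>p::complex poly. \<forall>z\<in>ball 0 1. f z = poly p z"
proof -
  have "eventually (\<lambda>k. 0 < nk k) sequentially"
    using eventually_gt_at_top[of 0]
    by eventually_elim (use seq_suble[OF assms(1)] in \<open>auto intro: less_le_trans\<close>)
  then have "\<forall>M. eventually (\<lambda>k. enat (M * nk k) < NK f (cball 0 r) (nk k)) sequentially"
    using eventually_less_if_ratio_tendsto_PInfty[OF assms(6)] by blast
  with superlinear_zeros_if_NK[OF assms(1) nat_ratio_bound[OF assms(1,2)]]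
  have zeros: "superlinear_zeros f (cball 0 r) (nat \<lceil>C\<rceil>)" .
  obtain F where F: "F holomorphic_on UNIV" "\<And>z. z \<in> ball 0 1 \<Longrightarrow> F z = f z"
    using entire_extension_if_taylor_decay[OF assms(3,4) taylor_coeffs_decay[OF assms(3-5) zeros]]
    by blast
  have "superlinear_zeros F (cball 0 r) (nat \<lceil>C\<rceil>)"
    by (rule superlinear_zeros_cong[OF zeros open_ball[of 0 1]]) (use assms(5) F(2) in auto)
  then obtain p where "\<And>z. F z = poly p z"
    using entire_poly_if_superlinear_zeros[OF F(1) assms(4)] by blast
  with F(2) show ?thesis
    by metis
qed

end
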